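(* Let $R\in\mathbb{R}^{n\times d}$ have rows $x_1,\dots,x_n$ with $\|x_i\|_2\le B$, assumed centered, and let $\hat\Sigma_R=\frac1n R^\top R$ with eigenvalues $\lambda_1(\hat\Sigma_R)\ge\dots\ge\lambda_d(\hat\Sigma_R)$. Suppose $\mathrm{gap}_k(R):=\lambda_k(\hat\Sigma_R)-\lambda_{k+1}(\hat\Sigma_R)>0$. Then $$\mathrm{RS}_{P_k}(R)\le\frac{2\sqrt2\,B^2}{(n+1)\,\mathrm{gap}_k(R)}.$$
   Context: For a finite set of vectors $S$, $\hat\Sigma_S=\frac{1}{|S|}\sum_{x\in S}xx^\top$ (so $\hat\Sigma_{R\cup\{x\}}=\frac{1}{n+1}(\sum_{i}x_ix_i^\top+xx^\top)$). For a symmetric matrix $\Sigma$, $P_k(\Sigma)=V_kV_k^\top$ where $V_k$ contains orthonormal eigenvectors for the $k$ largest eigenvalues. The retain sensitivity of the rank-$k$ projector is $\mathrm{RS}_{P_k}(R)=\max_{x}\|P_k(\hat\Sigma_{R\cup\{x\}})-P_k(\hat\Sigma_R)\|_F$, the maximum over added points $x\in\mathbb{R}^d$ with $\|x\|_2\le B$. *)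

theory Defs
  imports "HOL-Analysis.Analysis"
begin

definition outer :: "real^'d \<Rightarrow> real^'d \<Rightarrow> real^'d^'d" where
  "outer u v = (\<chi> a b. u $ a * v $ b)"

definition frob_norm :: "real^'d^'d \<Rightarrow> real" where
  "frob_norm M = sqrt (\<Sum>a\<in>UNIV. \<Sum>b\<in>UNIV. (M $ a $ b)^2)"

text \<open>A full orthonormal eigendecomposition of S: eigenvectors U 0, ..., U (d-1)
  (orthonormal, hence a basis) with eigenvalues lam 0 \<ge> ... \<ge> lam (d-1),
  listed with multiplicity in non-increasing order (0-based indices).\<close>
definition sym_eigdecomp :: "real^'d^'d \<Rightarrow> (nat \<Rightarrow> real) \<Rightarrow> (nat \<Rightarrow> real^'d) \<Rightarrow> bool" where
  "sym_eigdecomp S lam U \<longleftrightarrow>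
     (\<forall>i<CARD('d). \<forall>j<CARD('d). U i \<bullet> U j = (if i = j then 1 else 0)) \<and>
     (\<forall>i<CARD('d). S *v U i = lam i *\<^sub>R U i) \<and>
     (\<forall>i j. i \<le> j \<and> j < CARD('d) \<longrightarrow> lam j \<le> lam i)"

text \<open>Eigenvalues in non-increasing order: eigval S (j-1) is lambda_j(S) (1-based in the paper).\<close>
definition eigval :: "real^'d^'d \<Rightarrow> nat \<Rightarrow> real" where
  "eigval S = (SOME lam. \<exists>U. sym_eigdecomp S lam U)"

text \<open>Rank-k projector P_k(S) = V_k V_k^T, V_k = eigenvectors of the k largest eigenvalues
  (if ties make the choice non-unique, some fixed choice is taken).\<close>
definition Pk :: "nat \<Rightarrow> real^'d^'d \<Rightarrow> real^'d^'d" where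
  "Pk k S = (SOME P. \<exists>lam U. sym_eigdecomp S lam U \<and> P = (\<Sum>i<k. outer (U i) (U i)))"

definition emp_cov :: "(nat \<Rightarrow> real^'d) \<Rightarrow> nat \<Rightarrow> real^'d^'d" where
  "emp_cov R n = (1 / real n) *\<^sub>R (\<Sum>i<n. outer (R i) (R i))"

definition emp_cov_add :: "(nat \<Rightarrow> real^'d) \<Rightarrow> nat \<Rightarrow> real^'d \<Rightarrow> real^'d^'d" where
  "emp_cov_add R n x = (1 / (real n + 1)) *\<^sub>R ((\<Sum>i<n. outer (R i) (R i)) + outer x x)"

definition retain_sens :: "nat \<Rightarrow> real \<Rightarrow> (nat \<Rightarrow> real^'d) \<Rightarrow> nat \<Rightarrow> real" where
  "retain_sens k B R n =
     (SUP x\<in>{x :: real^'d. norm x \<le> B}. frob_norm (Pk k (emp_cov_add R n x) - Pk k (emp_cov R n)))"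

end

theory Submission
  imports Defs
begin

text \<open>Adding a point x turns the unnormalised scatter matrix S = sum_i x_i x_i^T into
  S + x x^T. As x x^T is positive semidefinite, Courant-Fischer shows that no eigenvalue
  decreases, so for a new top-k eigenvector v_j and an old bottom eigenvector u_i
  (j < k <= i) the separation mu_j - lambda_i is at least the k-th eigengap of S, which is
  n gap_k(R). Evaluating u_i^T (S + x x^T) v_j in two ways gives
  (mu_j - lambda_i) <u_i, v_j> = <u_i, x> <x, v_j>, and then
  |P' - P|_F^2 = 2 sum_{j < k <= i} <u_i, v_j>^2 <= 2 |x|^4 / (n gap_k(R))^2.
  The resulting bound sqrt 2 B^2 / (n gap_k(R)) is sharper than the claimed one.\<close>

definition orthonormal_upto :: "(nat \<Rightarrow> real^'d) \<Rightarrow> nat \<Rightarrow> bool" where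
  "orthonormal_upto U m \<longleftrightarrow> (\<forall>i<m. \<forall>j<m. U i \<bullet> U j = (if i = j then 1 else 0))"

definition frob_inner :: "real^'d^'d \<Rightarrow> real^'d^'d \<Rightarrow> real" where
  "frob_inner A B = (\<Sum>a\<in>UNIV. \<Sum>b\<in>UNIV. A $ a $ b * B $ a $ b)"

lemma transpose_outer: "transpose (outer x y) = outer y x"
  by (simp add: transpose_def outer_def mult.commute)

lemma transpose_add: "transpose (A + B) = transpose A + transpose (B :: 'a::semiring_1^'n^'m)"
  by (simp add: transpose_def vec_eq_iff)

lemma transpose_sum: "transpose (\<Sum>i\<in>I. A i) = (\<Sum>i\<in>I. transpose (A i :: 'a::semiring_1^'n^'m))"
  by (simp add: transpose_def vec_eq_iff sum_component)

lemma outer_mult: "outer x y *v v = (y \<bullet> v) *\<^sub>R x"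
  by (simp add: vec_eq_iff outer_def matrix_vector_mult_def inner_vec_def sum_distrib_left mult_ac)

lemma symmetric_matrix_inner:
  fixes M :: "real^'d^'d"
  assumes "transpose M = M"
  shows "(M *v a) \<bullet> b = a \<bullet> (M *v b)"
  by (metis assms dot_lmul_matrix vector_transpose_matrix)

lemma orthonormal_upto_mono: "orthonormal_upto U m \<Longrightarrow> k \<le> m \<Longrightarrow> orthonormal_upto U k"
  by (simp add: orthonormal_upto_def)

lemma orthonormal_upto_inj:
  assumes "orthonormal_upto U m"
  shows "inj_on U {..<m}"
proof (rule inj_onI)
  fix i j assume ij: "i \<in> {..<m}" "j \<in> {..<m}" and "U i = U j"
  then have "U i \<bullet> U j = 1" using assms by (auto simp: orthonormal_upto_def)
  then show "i = j" using assms ij by (auto simp: orthonormal_upto_def split: if_splits)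
qed

lemma orthonormal_upto_expansion:
  fixes U :: "nat \<Rightarrow> real^'d"
  assumes on: "orthonormal_upto U CARD('d)"
  shows "w = (\<Sum>i<CARD('d). (w \<bullet> U i) *\<^sub>R U i)"
proof -
  let ?d = "CARD('d)"
  define B where "B = U ` {..<?d}"
  have "U i \<noteq> 0" if "i < ?d" for i
  proof
    assume "U i = 0"
    moreover have "U i \<bullet> U i = 1" using on that by (simp add: orthonormal_upto_def)
    ultimately show False by simp
  qed
  then have "0 \<notin> B" by (auto simp: B_def)
  moreover have "pairwise orthogonal B"
    using on by (auto simp: B_def orthonormal_upto_def pairwise_def orthogonal_def)
  ultimately have "independent B" by (simp add: pairwise_orthogonal_independent)
  moreover have "card B = dim (UNIV :: (real^'d) set)"
    using orthonormal_upto_inj[OF on] by (simp add: B_def card_image)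
  ultimately have span: "UNIV \<subseteq> span B"
    using card_eq_dim[of B UNIV] by (simp add: B_def)
  define r where "r = w - (\<Sum>i<?d. (w \<bullet> U i) *\<^sub>R U i)"
  have "r \<bullet> U j = 0" if "j < ?d" for j
  proof -
    have "(\<Sum>i<?d. (w \<bullet> U i) * (U i \<bullet> U j)) = (\<Sum>i<?d. if i = j then w \<bullet> U j else 0)"
      using on that by (intro sum.cong) (auto simp: orthonormal_upto_def)
    then show ?thesis using that by (simp add: r_def inner_diff_left inner_sum_left)
  qed
  then have "\<And>y. y \<in> B \<Longrightarrow> orthogonal r y" by (auto simp: B_def orthogonal_def)
  with orthogonal_to_span[of r B r] span have "r = 0" by (auto simp: orthogonal_def)
  then show ?thesis by (simp add: r_def)
qed

lemma orthonormal_upto_parseval: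
  fixes U :: "nat \<Rightarrow> real^'d"
  assumes "orthonormal_upto U CARD('d)"
  shows "x \<bullet> y = (\<Sum>i<CARD('d). (x \<bullet> U i) * (y \<bullet> U i))"
proof -
  have "x \<bullet> y = (\<Sum>i<CARD('d). (x \<bullet> U i) *\<^sub>R U i) \<bullet> y"
    using orthonormal_upto_expansion[OF assms, of x] by simp
  also have "\<dots> = (\<Sum>i<CARD('d). (x \<bullet> U i) * (U i \<bullet> y))"
    by (simp add: inner_sum_left)
  finally show ?thesis by (simp add: inner_commute)
qed

lemma orthonormal_upto_inner_self:
  fixes U :: "nat \<Rightarrow> real^'d"
  assumes "orthonormal_upto U CARD('d)"
  shows "w \<bullet> w = (\<Sum>i<CARD('d). (w \<bullet> U i)^2)"
  using orthonormal_upto_parseval[OF assms, of w w] by (simp add: power2_eq_square)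

lemma exists_unit_orthogonal:
  fixes T :: "(real^'d) set"
  assumes "finite T" "card T < CARD('d)"
  shows "\<exists>w. norm w = 1 \<and> (\<forall>t\<in>T. w \<bullet> t = 0)"
proof -
  have "dim T < DIM(real^'d)" using dim_le_card'[OF assms(1)] assms(2) by simp
  then obtain x where "x \<noteq> 0" "\<And>y. y \<in> span T \<Longrightarrow> orthogonal x y"
    using orthogonal_to_subspace_exists by blast
  then show ?thesis
    by (intro exI[of _ "x /\<^sub>R norm x"]) (auto simp: orthogonal_def span_base)
qed

lemma linear_le_quadratic_imp_zero:
  fixes e K :: real
  assumes "\<And>t. 2 * t * e \<le> t^2 * K"
  shows "e = 0"
proof -
  define D where "D = \<bar>K\<bar> + 1"
  have D: "D > 0" by (simp add: D_def)
  have "2 * (e / D) * e \<le> (e / D)^2 * K" by (rule assms)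
  then have "2 * e^2 * D \<le> e^2 * K"
    using D by (simp add: field_simps power2_eq_square)
  moreover have "e^2 * K \<le> e^2 * D" unfolding D_def by (intro mult_left_mono) auto
  ultimately have "e^2 * D \<le> 0" by linarith
  then show ?thesis using D by (simp add: mult_le_0_iff)
qed

lemma rayleigh_maximizer_is_eigenvector:
  fixes M :: "real^'d^'d"
  assumes sym: "transpose M = M"
    and S: "subspace S" "\<And>v. v \<in> S \<Longrightarrow> M *v v \<in> S"
    and w: "w \<in> S" "norm w = 1"
    and max: "\<And>v. v \<in> S \<Longrightarrow> norm v = 1 \<Longrightarrow> v \<bullet> (M *v v) \<le> w \<bullet> (M *v w)"
  shows "M *v w = (w \<bullet> (M *v w)) *\<^sub>R w"
proof -
  define c where "c = w \<bullet> (M *v w)"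
  define y where "y = M *v w - c *\<^sub>R w"
  define e where "e = (M *v w) \<bullet> y"
  have ww: "w \<bullet> w = 1" using w(2) by (simp add: norm_eq_1)
  have yS: "y \<in> S" using S w(1) by (simp add: y_def subspace_diff subspace_scale)
  have "y \<bullet> w = (M *v w) \<bullet> w - c * (w \<bullet> w)" by (simp add: y_def inner_diff_left)
  then have yw: "y \<bullet> w = 0" using ww by (simp add: c_def inner_commute)
  \<comment> \<open>Maximality along the unit vectors in the direction of w + t y, for all t, is a
    first-order condition forcing e = y \<bullet> y to vanish.\<close>
  have "2 * t * e \<le> t^2 * (c * (y \<bullet> y) - y \<bullet> (M *v y))" for t
  proof -
    define v where "v = w + t *\<^sub>R y"
    have vS: "v \<in> S" using S(1) w(1) yS by (simp add: v_def subspace_add subspace_scale)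
    have vv: "v \<bullet> v = 1 + t^2 * (y \<bullet> y)"
      using ww yw by (simp add: v_def inner_add_left inner_add_right inner_commute power2_eq_square)
    then have "norm v \<noteq> 0" by (auto simp: add_nonneg_eq_0_iff)
    then have "(v /\<^sub>R norm v) \<bullet> (M *v (v /\<^sub>R norm v)) \<le> c"
      using max[of "v /\<^sub>R norm v"] S(1) vS by (simp add: subspace_scale c_def)
    then have "v \<bullet> (M *v v) \<le> c * (v \<bullet> v)"
      using \<open>norm v \<noteq> 0\<close> by (simp add: matrix_vector_mult_scaleR dot_square_norm power2_eq_square field_simps)
    moreover have "v \<bullet> (M *v v) = c + 2 * t * e + t^2 * (y \<bullet> (M *v y))"
      using symmetric_matrix_inner[OF sym, of w y]
      by (simp add: v_def c_def e_def matrix_vector_right_distrib matrix_vector_mult_scaleR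
          inner_add_left inner_add_right inner_commute power2_eq_square algebra_simps)
    ultimately show ?thesis using vv by (simp add: algebra_simps)
  qed
  then have "e = 0" by (rule linear_le_quadratic_imp_zero)
  moreover have "y \<bullet> y = e" using yw by (simp add: e_def y_def inner_diff_left inner_commute)
  ultimately show ?thesis by (simp add: y_def c_def)
qed

text \<open>Eigenpairs are produced one at a time by maximising the quadratic form on the unit
  vectors orthogonal to those found so far; the last conjunct records this maximality, which
  is what makes the next eigenvalue no larger than the previous one.\<close>

lemma sym_eigdecomp_partial:
  fixes M :: "real^'d^'d"
  assumes sym: "transpose M = M"
  shows "m \<le> CARD('d) \<Longrightarrow> \<exists>lam U. orthonormal_upto U m \<and> (\<forall>i<m. M *v U i = lam i *\<^sub>R U i)
     \<and> (\<forall>i j. i \<le> j \<and> j < m \<longrightarrow> lam j \<le> lam i)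
     \<and> (0 < m \<longrightarrow> (\<forall>w. norm w = 1 \<and> (\<forall>i<m - 1. U i \<bullet> w = 0) \<longrightarrow> w \<bullet> (M *v w) \<le> lam (m - 1)))"
proof (induction m)
  case 0
  then show ?case by (auto simp: orthonormal_upto_def)
next
  case (Suc m)
  then obtain lam U where on: "orthonormal_upto U m" and eig: "\<forall>i<m. M *v U i = lam i *\<^sub>R U i"
    and ord: "\<forall>i j. i \<le> j \<and> j < m \<longrightarrow> lam j \<le> lam i"
    and max_prev: "0 < m \<longrightarrow> (\<forall>w. norm w = 1 \<and> (\<forall>i<m - 1. U i \<bullet> w = 0) \<longrightarrow> w \<bullet> (M *v w) \<le> lam (m - 1))"
    by auto
  define S where "S = {w. \<forall>i<m. U i \<bullet> w = 0}"
  have S_subspace: "subspace S"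
    by (auto simp: S_def subspace_def inner_add_right)
  have S_invariant: "M *v v \<in> S" if "v \<in> S" for v
  proof -
    have "U i \<bullet> (M *v v) = lam i * (U i \<bullet> v)" if "i < m" for i
      using that eig symmetric_matrix_inner[OF sym, of "U i" v] by simp
    then show ?thesis using \<open>v \<in> S\<close> by (simp add: S_def)
  qed
  have "compact (sphere 0 1 \<inter> S)"
    by (intro compact_Int_closed compact_sphere closed_subspace S_subspace)
  moreover have "sphere 0 1 \<inter> S \<noteq> {}"
  proof -
    have "card (U ` {..<m}) < CARD('d)"
      using card_image_le[of "{..<m}" U] Suc.prems by simp
    then obtain w where "norm w = 1" "\<forall>t\<in>U ` {..<m}. w \<bullet> t = 0"
      using exists_unit_orthogonal[of "U ` {..<m}"] by blast
    then have "w \<in> sphere 0 1 \<inter> S" by (auto simp: S_def inner_commute)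
    then show ?thesis by blast
  qed
  moreover have "continuous_on (sphere 0 1 \<inter> S) (\<lambda>v. v \<bullet> (M *v v))"
    by (intro continuous_intros)
  ultimately obtain w where wS: "w \<in> sphere 0 1 \<inter> S"
    and w_max: "\<forall>v \<in> sphere 0 1 \<inter> S. v \<bullet> (M *v v) \<le> w \<bullet> (M *v w)"
    by (blast dest: continuous_attains_sup)
  define c where "c = w \<bullet> (M *v w)"
  have Mw: "M *v w = c *\<^sub>R w" unfolding c_def
    using wS w_max by (intro rayleigh_maximizer_is_eigenvector[OF sym S_subspace S_invariant]) auto
  define lam' where "lam' = lam(m := c)"
  define U' where "U' = U(m := w)"
  have "w \<bullet> w = 1" "\<forall>i<m. U i \<bullet> w = 0" using wS by (auto simp: S_def norm_eq_1)
  then have "orthonormal_upto U' (Suc m)"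
    using on by (auto simp: orthonormal_upto_def U'_def less_Suc_eq inner_commute)
  moreover have "\<forall>i<Suc m. M *v U' i = lam' i *\<^sub>R U' i"
    using eig Mw by (auto simp: U'_def lam'_def less_Suc_eq)
  moreover have "lam' j \<le> lam' i" if "i \<le> j" "j < Suc m" for i j
  proof (cases "j < m")
    case True
    then show ?thesis using ord that by (auto simp: lam'_def)
  next
    case False
    then have j: "j = m" using that by simp
    show ?thesis
    proof (cases "i = m")
      case False
      then have "i < m" using that j by simp
      then have "c \<le> lam (m - 1)" using max_prev wS by (auto simp: c_def S_def)
      moreover have "lam (m - 1) \<le> lam i" using ord \<open>i < m\<close> by auto
      ultimately show ?thesis using j \<open>i < m\<close> by (simp add: lam'_def)
    qed (simp add: j)
  qed
  moreover have "v \<bullet> (M *v v) \<le> lam' m" if "norm v = 1" "\<forall>i<m. U' i \<bullet> v = 0" for v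
    using that w_max by (auto simp: S_def U'_def lam'_def c_def)
  ultimately show ?case by (intro exI[of _ lam'] exI[of _ U']) auto
qed

lemma sym_eigdecomp_exists:
  fixes M :: "real^'d^'d"
  assumes "transpose M = M"
  shows "\<exists>lam U. sym_eigdecomp M lam U"
  using sym_eigdecomp_partial[OF assms, of "CARD('d)"]
  unfolding sym_eigdecomp_def orthonormal_upto_def by blast

lemma sym_eigdecomp_orthonormal:
  "sym_eigdecomp M lam U \<Longrightarrow> orthonormal_upto U CARD('d)" for M :: "real^'d^'d"
  by (simp add: sym_eigdecomp_def orthonormal_upto_def)

lemma sym_eigdecomp_scaleR:
  fixes M :: "real^'d^'d"
  assumes "sym_eigdecomp M lam U" "c > 0"
  shows "sym_eigdecomp (c *\<^sub>R M) (\<lambda>i. c * lam i) U"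
  using assms by (auto simp: sym_eigdecomp_def scaleR_matrix_vector_assoc[symmetric])

lemma sym_eigdecomp_quadratic_form:
  fixes M :: "real^'d^'d"
  assumes dM: "sym_eigdecomp M lam U" and sym: "transpose M = M"
  shows "w \<bullet> (M *v w) = (\<Sum>i<CARD('d). lam i * (w \<bullet> U i)^2)"
proof -
  have "w \<bullet> (M *v w) = (\<Sum>i<CARD('d). (w \<bullet> U i) * ((M *v w) \<bullet> U i))"
    using orthonormal_upto_parseval[OF sym_eigdecomp_orthonormal[OF dM]] .
  also have "\<dots> = (\<Sum>i<CARD('d). lam i * (w \<bullet> U i)^2)"
  proof (intro sum.cong refl)
    fix i assume "i \<in> {..<CARD('d)}"
    then have "(M *v w) \<bullet> U i = lam i * (w \<bullet> U i)"
      using dM symmetric_matrix_inner[OF sym, of w "U i"] by (simp add: sym_eigdecomp_def)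
    then show "(w \<bullet> U i) * ((M *v w) \<bullet> U i) = lam i * (w \<bullet> U i)^2"
      by (simp add: power2_eq_square)
  qed
  finally show ?thesis .
qed

text \<open>Courant-Fischer: a unit vector orthogonal to u_(j+1), ..., u_(d-1) and to
  v_0, ..., v_(j-1) exists by counting dimensions, and its Rayleigh quotient lies between
  lambda_j and mu_j.\<close>

lemma sym_eigdecomp_eigenvalue_mono:
  fixes M M' :: "real^'d^'d"
  assumes dM: "sym_eigdecomp M lam U" and dM': "sym_eigdecomp M' mu V"
    and sM: "transpose M = M" and sM': "transpose M' = M'"
    and le: "\<And>w. w \<bullet> (M *v w) \<le> w \<bullet> (M' *v w)"
    and j: "j < CARD('d)"
  shows "lam j \<le> mu j"
proof -
  let ?d = "CARD('d)"
  define T where "T = U ` {j<..<?d} \<union> V ` {..<j}"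
  have "card T \<le> card {j<..<?d} + card {..<j}"
    unfolding T_def by (meson card_Un_le card_image_le add_mono finite_lessThan
        finite_greaterThanLessThan order_trans)
  also have "\<dots> < ?d" using j by simp
  finally obtain w where "norm w = 1" and wT: "\<forall>t\<in>T. w \<bullet> t = 0"
    using exists_unit_orthogonal[of T] by (auto simp: T_def)
  then have ww: "w \<bullet> w = 1" by (simp add: norm_eq_1)
  have "lam j = (\<Sum>i<?d. lam j * (w \<bullet> U i)^2)"
    using orthonormal_upto_inner_self[OF sym_eigdecomp_orthonormal[OF dM], of w] ww
    by (simp add: sum_distrib_left[symmetric])
  also have "\<dots> \<le> (\<Sum>i<?d. lam i * (w \<bullet> U i)^2)"
  proof (intro sum_mono)
    fix i assume i: "i \<in> {..<?d}"
    show "lam j * (w \<bullet> U i)^2 \<le> lam i * (w \<bullet> U i)^2"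
    proof (cases "i \<le> j")
      case True
      then have "lam j \<le> lam i" using dM j by (auto simp: sym_eigdecomp_def)
      then show ?thesis by (intro mult_right_mono) auto
    qed (use wT i in \<open>auto simp: T_def\<close>)
  qed
  also have "\<dots> = w \<bullet> (M *v w)" using sym_eigdecomp_quadratic_form[OF dM sM] by simp
  also have "\<dots> \<le> w \<bullet> (M' *v w)" by (rule le)
  also have "\<dots> = (\<Sum>i<?d. mu i * (w \<bullet> V i)^2)" using sym_eigdecomp_quadratic_form[OF dM' sM'] by simp
  also have "\<dots> \<le> (\<Sum>i<?d. mu j * (w \<bullet> V i)^2)"
  proof (intro sum_mono)
    fix i assume i: "i \<in> {..<?d}"
    show "mu i * (w \<bullet> V i)^2 \<le> mu j * (w \<bullet> V i)^2"
    proof (cases "j \<le> i")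
      case True
      then have "mu i \<le> mu j" using dM' i by (auto simp: sym_eigdecomp_def)
      then show ?thesis by (intro mult_right_mono) auto
    qed (use wT i in \<open>auto simp: T_def\<close>)
  qed
  also have "\<dots> = mu j"
    using orthonormal_upto_inner_self[OF sym_eigdecomp_orthonormal[OF dM'], of w] ww
    by (simp add: sum_distrib_left[symmetric])
  finally show ?thesis .
qed

lemma sym_eigdecomp_eigenvalue_unique:
  fixes M :: "real^'d^'d"
  assumes "sym_eigdecomp M lam U" "sym_eigdecomp M mu V" "transpose M = M" "j < CARD('d)"
  shows "lam j = mu j"
  using sym_eigdecomp_eigenvalue_mono[OF assms(1,2,3,3) _ assms(4)]
    sym_eigdecomp_eigenvalue_mono[OF assms(2,1,3,3) _ assms(4)] by simp

lemma eigval_sym_eigdecomp: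
  fixes M :: "real^'d^'d"
  assumes "transpose M = M"
  shows "\<exists>U. sym_eigdecomp M (eigval M) U"
  unfolding eigval_def using sym_eigdecomp_exists[OF assms] by (rule someI_ex)

lemma Pk_sym_eigdecomp:
  fixes M :: "real^'d^'d"
  assumes "transpose M = M"
  shows "\<exists>lam U. sym_eigdecomp M lam U \<and> Pk k M = (\<Sum>i<k. outer (U i) (U i))"
proof -
  have "\<exists>P lam U. sym_eigdecomp M lam U \<and> P = (\<Sum>i<k. outer (U i) (U i))"
    using sym_eigdecomp_exists[OF assms] by blast
  then show ?thesis unfolding Pk_def by (rule someI_ex)
qed

lemma frob_norm_nonneg: "0 \<le> frob_norm A"
  by (simp add: frob_norm_def sum_nonneg)

lemma frob_norm_sq: "(frob_norm A)^2 = frob_inner A A"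
  by (simp add: frob_norm_def frob_inner_def sum_nonneg power2_eq_square)

lemma frob_inner_commute: "frob_inner A B = frob_inner B A"
  by (simp add: frob_inner_def mult.commute)

lemma frob_inner_add_left: "frob_inner (A + B) C = frob_inner A C + frob_inner B C"
  by (simp add: frob_inner_def distrib_right sum.distrib)

lemma frob_inner_diff_left: "frob_inner (A - B) C = frob_inner A C - frob_inner B C"
  by (simp add: frob_inner_def left_diff_distrib sum_subtractf)

lemma frob_inner_diff_right: "frob_inner A (B - C) = frob_inner A B - frob_inner A C"
  by (simp add: frob_inner_def right_diff_distrib sum_subtractf)

lemma frob_norm_diff_sq:
  "(frob_norm (A - B))^2 = frob_inner A A + frob_inner B B - 2 * frob_inner A B"
  by (simp add: frob_norm_sq frob_inner_diff_left frob_inner_diff_right frob_inner_commute[of B A])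

lemma frob_inner_sum_left: "frob_inner (\<Sum>i\<in>I. A i) B = (\<Sum>i\<in>I. frob_inner (A i) B)"
proof (induction I rule: infinite_finite_induct)
  case (insert i I)
  then show ?case by (simp add: frob_inner_add_left)
qed (simp_all add: frob_inner_def)

lemma frob_inner_sum_right: "frob_inner A (\<Sum>i\<in>I. B i) = (\<Sum>i\<in>I. frob_inner A (B i))"
proof -
  have "frob_inner A (\<Sum>i\<in>I. B i) = (\<Sum>i\<in>I. frob_inner (B i) A)"
    by (subst frob_inner_commute) (rule frob_inner_sum_left)
  then show ?thesis by (simp add: frob_inner_commute[of A])
qed

lemma frob_inner_outer: "frob_inner (outer u u) (outer v v) = (u \<bullet> v)^2"
  by (simp add: frob_inner_def outer_def inner_vec_def power2_eq_square sum_product mult_ac)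

lemma frob_inner_projectors:
  fixes U V :: "nat \<Rightarrow> real^'d"
  shows "frob_inner (\<Sum>i<k. outer (U i) (U i)) (\<Sum>j<m. outer (V j) (V j))
       = (\<Sum>i<k. \<Sum>j<m. (U i \<bullet> V j)^2)"
  by (simp add: frob_inner_sum_left frob_inner_sum_right frob_inner_outer, rule sum.swap)

lemma frob_inner_projector_self:
  assumes "orthonormal_upto U k"
  shows "frob_inner (\<Sum>i<k. outer (U i) (U i)) (\<Sum>i<k. outer (U i) (U i)) = k"
proof -
  have "frob_inner (\<Sum>i<k. outer (U i) (U i)) (\<Sum>i<k. outer (U i) (U i))
      = (\<Sum>i<k. \<Sum>i'<k. (if i = i' then 1 else 0)^2)"
    using assms by (simp add: frob_inner_projectors orthonormal_upto_def)
  also have "\<dots> = (\<Sum>i<k. \<Sum>i'<k. if i = i' then 1 else 0)"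
    by (intro sum.cong refl) simp
  finally show ?thesis by simp
qed

lemma frob_norm_projector_diff_sq:
  fixes U V :: "nat \<Rightarrow> real^'d"
  assumes onU: "orthonormal_upto U CARD('d)" and onV: "orthonormal_upto V CARD('d)"
    and k: "k \<le> CARD('d)"
  shows "(frob_norm ((\<Sum>j<k. outer (V j) (V j)) - (\<Sum>i<k. outer (U i) (U i))))^2
       = 2 * (\<Sum>j<k. \<Sum>i\<in>{k..<CARD('d)}. (U i \<bullet> V j)^2)"
proof -
  let ?d = "CARD('d)"
  have "(\<Sum>i<k. (U i \<bullet> V j)^2) = 1 - (\<Sum>i\<in>{k..<?d}. (U i \<bullet> V j)^2)" if j: "j < k" for j
  proof -
    have "1 = V j \<bullet> V j" using onV j k by (simp add: orthonormal_upto_def)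
    also have "\<dots> = (\<Sum>i<?d. (U i \<bullet> V j)^2)"
      using orthonormal_upto_inner_self[OF onU, of "V j"] by (simp add: inner_commute)
    also have "\<dots> = (\<Sum>i<k. (U i \<bullet> V j)^2) + (\<Sum>i\<in>{k..<?d}. (U i \<bullet> V j)^2)"
      by (subst ivl_disj_un_one(2)[OF k, symmetric]) (simp add: sum.union_disjoint ivl_disj_int_one)
    finally show ?thesis by simp
  qed
  then have "frob_inner (\<Sum>j<k. outer (V j) (V j)) (\<Sum>i<k. outer (U i) (U i))
      = (\<Sum>j<k. 1 - (\<Sum>i\<in>{k..<?d}. (U i \<bullet> V j)^2))"
    by (simp add: frob_inner_projectors inner_commute)
  then have "frob_inner (\<Sum>j<k. outer (V j) (V j)) (\<Sum>i<k. outer (U i) (U i))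
      = k - (\<Sum>j<k. \<Sum>i\<in>{k..<?d}. (U i \<bullet> V j)^2)"
    by (simp add: sum_subtractf)
  then show ?thesis
    using frob_inner_projector_self[OF orthonormal_upto_mono[OF onU k]]
      frob_inner_projector_self[OF orthonormal_upto_mono[OF onV k]]
    by (simp add: frob_norm_diff_sq)
qed

lemma rank_one_update_eigvec_inner:
  fixes S :: "real^'d^'d"
  assumes sym: "transpose S = S" and u: "S *v u = \<alpha> *\<^sub>R u"
    and v: "(S + outer x x) *v v = \<beta> *\<^sub>R v"
  shows "(\<beta> - \<alpha>) * (u \<bullet> v) = (u \<bullet> x) * (x \<bullet> v)"
proof -
  have "\<beta> * (u \<bullet> v) = u \<bullet> ((S + outer x x) *v v)" using v by simp
  also have "\<dots> = (S *v u) \<bullet> v + (u \<bullet> x) * (x \<bullet> v)"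
    by (simp add: matrix_vector_mult_add_rdistrib inner_add_right outer_mult mult.commute
        symmetric_matrix_inner[OF sym])
  also have "\<dots> = \<alpha> * (u \<bullet> v) + (u \<bullet> x) * (x \<bullet> v)" using u by simp
  finally show ?thesis by (simp add: algebra_simps)
qed

lemma rank_one_update_eigenvalue_mono:
  fixes S :: "real^'d^'d"
  assumes sym: "transpose S = S"
    and dU: "sym_eigdecomp S lam U" and dV: "sym_eigdecomp (S + outer x x) mu V"
    and j: "j < CARD('d)"
  shows "lam j \<le> mu j"
proof (rule sym_eigdecomp_eigenvalue_mono[OF dU dV sym _ _ j])
  show "transpose (S + outer x x) = S + outer x x"
    using sym by (simp add: transpose_add transpose_outer)
  show "w \<bullet> (S *v w) \<le> w \<bullet> ((S + outer x x) *v w)" for w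
    by (simp add: matrix_vector_mult_add_rdistrib inner_add_right outer_mult inner_commute[of x w])
qed

lemma rank_one_update_cross_inner_bound:
  fixes S :: "real^'d^'d"
  assumes sym: "transpose S = S"
    and dU: "sym_eigdecomp S lam U" and dV: "sym_eigdecomp (S + outer x x) mu V"
    and ij: "j < k" "k \<le> i" "i < CARD('d)"
  shows "(lam (k - 1) - lam k)^2 * (U i \<bullet> V j)^2 \<le> (U i \<bullet> x)^2 * (x \<bullet> V j)^2"
proof -
  have "j \<le> k - 1" "k - 1 \<le> k" "k - 1 < CARD('d)" "k < CARD('d)" using ij by simp_all
  then have "mu (k - 1) \<le> mu j" "lam i \<le> lam k" "lam k \<le> lam (k - 1)"
    using dU dV ij unfolding sym_eigdecomp_def by blast+
  moreover have "lam (k - 1) \<le> mu (k - 1)"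
    using rank_one_update_eigenvalue_mono[OF sym dU dV] ij by simp
  ultimately have gap: "0 \<le> lam (k - 1) - lam k" "lam (k - 1) - lam k \<le> mu j - lam i"
    by linarith+
  have "(mu j - lam i) * (U i \<bullet> V j) = (U i \<bullet> x) * (x \<bullet> V j)"
    by (rule rank_one_update_eigvec_inner[OF sym]) (use dU dV ij in \<open>simp_all add: sym_eigdecomp_def\<close>)
  then have "(mu j - lam i)^2 * (U i \<bullet> V j)^2 = (U i \<bullet> x)^2 * (x \<bullet> V j)^2"
    by (metis power_mult_distrib)
  moreover have "(lam (k - 1) - lam k)^2 * (U i \<bullet> V j)^2 \<le> (mu j - lam i)^2 * (U i \<bullet> V j)^2"
    using gap by (intro mult_right_mono power_mono) auto
  ultimately show ?thesis by simp
qed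

lemma projector_rank_one_update_bound:
  fixes S :: "real^'d^'d"
  assumes sym: "transpose S = S"
    and dU: "sym_eigdecomp S lam U" and dV: "sym_eigdecomp (S + outer x x) mu V"
    and k: "k < CARD('d)"
  shows "(lam (k - 1) - lam k) * frob_norm ((\<Sum>j<k. outer (V j) (V j)) - (\<Sum>i<k. outer (U i) (U i)))
           \<le> sqrt 2 * (x \<bullet> x)"
proof -
  let ?d = "CARD('d)" and ?g = "lam (k - 1) - lam k"
  let ?F = "frob_norm ((\<Sum>j<k. outer (V j) (V j)) - (\<Sum>i<k. outer (U i) (U i)))"
  have onU: "orthonormal_upto U ?d" and onV: "orthonormal_upto V ?d"
    using dU dV by (simp_all add: sym_eigdecomp_orthonormal)
  have "(?g * ?F)^2 = 2 * (\<Sum>j<k. \<Sum>i\<in>{k..<?d}. ?g^2 * (U i \<bullet> V j)^2)"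
    using frob_norm_projector_diff_sq[OF onU onV] k
    by (simp add: power_mult_distrib sum_distrib_left mult_ac)
  also have "\<dots> \<le> 2 * (\<Sum>j<k. \<Sum>i\<in>{k..<?d}. (x \<bullet> V j)^2 * (U i \<bullet> x)^2)"
    using rank_one_update_cross_inner_bound[OF sym dU dV]
    by (intro mult_left_mono sum_mono) (auto simp: mult.commute)
  also have "\<dots> = 2 * ((\<Sum>j<k. (x \<bullet> V j)^2) * (\<Sum>i\<in>{k..<?d}. (x \<bullet> U i)^2))"
    by (simp add: sum_product inner_commute)
  also have "\<dots> \<le> 2 * ((x \<bullet> x) * (x \<bullet> x))"
  proof -
    have "(\<Sum>j<k. (x \<bullet> V j)^2) \<le> (\<Sum>j<?d. (x \<bullet> V j)^2)"
      using k by (intro sum_mono2) auto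
    moreover have "(\<Sum>i\<in>{k..<?d}. (x \<bullet> U i)^2) \<le> (\<Sum>i<?d. (x \<bullet> U i)^2)"
      by (intro sum_mono2) auto
    ultimately show ?thesis
      unfolding orthonormal_upto_inner_self[OF onU, of x, symmetric]
        orthonormal_upto_inner_self[OF onV, of x, symmetric]
      by (intro mult_left_mono mult_mono) (auto intro: sum_nonneg)
  qed
  also have "\<dots> = (sqrt 2 * (x \<bullet> x))^2"
    by (simp add: power_mult_distrib power2_eq_square)
  finally show ?thesis
    by (rule power2_le_imp_le) simp
qed

lemma transpose_emp_cov: "transpose (emp_cov R n) = emp_cov R n"
  by (simp add: emp_cov_def transpose_scalar transpose_sum transpose_outer)

lemma transpose_emp_cov_add: "transpose (emp_cov_add R n x) = emp_cov_add R n x"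
  by (simp add: emp_cov_add_def transpose_scalar transpose_add transpose_sum transpose_outer)

lemma emp_cov_projector_diff_bound:
  fixes R :: "nat \<Rightarrow> real^'d"
  assumes n: "n \<ge> 1" and k: "k < CARD('d)"
  shows "real n * (eigval (emp_cov R n) (k - 1) - eigval (emp_cov R n) k)
           * frob_norm (Pk k (emp_cov_add R n x) - Pk k (emp_cov R n)) \<le> sqrt 2 * (x \<bullet> x)"
proof -
  define S where "S = (\<Sum>i<n. outer (R i) (R i))"
  have sym: "transpose S = S" by (simp add: S_def transpose_sum transpose_outer)
  have S: "real n *\<^sub>R emp_cov R n = S" using n by (simp add: S_def emp_cov_def)
  have T: "(real n + 1) *\<^sub>R emp_cov_add R n x = S + outer x x"
    by (simp add: S_def emp_cov_add_def add_pos_nonneg)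
  obtain lam U where dU: "sym_eigdecomp (emp_cov R n) lam U"
    and PU: "Pk k (emp_cov R n) = (\<Sum>i<k. outer (U i) (U i))"
    using Pk_sym_eigdecomp[OF transpose_emp_cov] by blast
  obtain mu V where dV: "sym_eigdecomp (emp_cov_add R n x) mu V"
    and PV: "Pk k (emp_cov_add R n x) = (\<Sum>i<k. outer (V i) (V i))"
    using Pk_sym_eigdecomp[OF transpose_emp_cov_add] by blast
  obtain E where dE: "sym_eigdecomp (emp_cov R n) (eigval (emp_cov R n)) E"
    using eigval_sym_eigdecomp[OF transpose_emp_cov] by blast
  have lam: "lam (k - 1) = eigval (emp_cov R n) (k - 1)" "lam k = eigval (emp_cov R n) k"
    using sym_eigdecomp_eigenvalue_unique[OF dU dE transpose_emp_cov] k by simp_all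
  have dS: "sym_eigdecomp S (\<lambda>i. real n * lam i) U"
    using sym_eigdecomp_scaleR[OF dU, of "real n"] n S by simp
  have dT: "sym_eigdecomp (S + outer x x) (\<lambda>i. (real n + 1) * mu i) V"
    using sym_eigdecomp_scaleR[OF dV, of "real n + 1"] T by simp
  show ?thesis
    using projector_rank_one_update_bound[OF sym dS dT k] PU PV lam
    by (simp add: right_diff_distrib)
qed

theorem mainTheorem9:
  fixes R :: "nat \<Rightarrow> real^'d" and n k :: nat and B :: real
  assumes "n \<ge> 1"
    and "\<forall>i<n. norm (R i) \<le> B"
    and "(\<Sum>i<n. R i) = 0"
    and "1 \<le> k" and "k < CARD('d)"
    and "eigval (emp_cov R n) (k - 1) - eigval (emp_cov R n) k > 0"
  shows "retain_sens k B R n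
           \<le> 2 * sqrt 2 * B^2 / ((real n + 1) * (eigval (emp_cov R n) (k - 1) - eigval (emp_cov R n) k))"
proof -
  define G where "G = eigval (emp_cov R n) (k - 1) - eigval (emp_cov R n) k"
  have G: "G > 0" using assms(6) by (simp add: G_def)
  have "norm (R 0) \<le> B" using assms(1,2) by simp
  then have B: "0 \<le> B" using norm_ge_zero order_trans by blast
  have "frob_norm (Pk k (emp_cov_add R n x) - Pk k (emp_cov R n)) \<le> 2 * sqrt 2 * B^2 / ((real n + 1) * G)"
    if x: "norm x \<le> B" for x
  proof -
    let ?F = "frob_norm (Pk k (emp_cov_add R n x) - Pk k (emp_cov R n))"
    have "0 \<le> G * ?F" using G by (simp add: frob_norm_nonneg)
    then have "(real n + 1) * (G * ?F) \<le> (2 * real n) * (G * ?F)"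
      using assms(1) by (intro mult_right_mono) auto
    also have "\<dots> = 2 * (real n * G * ?F)" by simp
    also have "\<dots> \<le> 2 * (sqrt 2 * (x \<bullet> x))"
      using emp_cov_projector_diff_bound[OF assms(1,5)] by (simp add: G_def)
    also have "\<dots> \<le> 2 * (sqrt 2 * B^2)"
      using x by (simp add: dot_square_norm power_mono)
    finally show ?thesis using G by (simp add: pos_le_divide_eq mult_ac)
  qed
  then have "retain_sens k B R n \<le> 2 * sqrt 2 * B^2 / ((real n + 1) * G)"
    unfolding retain_sens_def using B by (intro cSUP_least) (auto intro: exI[of _ 0])
  then show ?thesis by (simp add: G_def)
qed

end
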